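(* Let $p\ge 3$ be a prime, $m,k\ge1$ integers, and $t,u\in\mathbb{Z}_p$ with $u\neq 0$ and $t^2\equiv u\pmod p$. Let $G$ be the set of all $m\times k$ matrices over $\mathbb{Z}_p$ with the operation $[a_{ij}]*[b_{ij}]=[(t a_{ij}+u b_{ij})\bmod p]$. Then $(G,* )$ is a $T^3$-AG-groupoid.
   Context: An AG-groupoid is a set with a binary operation satisfying $(a*b)*c=(c*b)*a$ for all $a,b,c$ (the condition $t^2\equiv u$ ensures $G$ is one). An AG-groupoid $G$ is a $T_l^3$-AG-groupoid if for all $a,b,c\in G$, $a*b=a*c$ implies $b*a=c*a$; a $T_r^3$-AG-groupoid if $b*a=c*a$ implies $a*b=a*c$; and a $T^3$-AG-groupoid if it is both. *)

theory Defs
  imports "HOL-Computational_Algebra.Primes"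
begin

definition AG_groupoid :: "'a set \<Rightarrow> ('a \<Rightarrow> 'a \<Rightarrow> 'a) \<Rightarrow> bool" where
  "AG_groupoid G f \<longleftrightarrow>
     (\<forall>a\<in>G. \<forall>b\<in>G. f a b \<in> G) \<and>
     (\<forall>a\<in>G. \<forall>b\<in>G. \<forall>c\<in>G. f (f a b) c = f (f c b) a)"

definition Tl3_AG_groupoid :: "'a set \<Rightarrow> ('a \<Rightarrow> 'a \<Rightarrow> 'a) \<Rightarrow> bool" where
  "Tl3_AG_groupoid G f \<longleftrightarrow> AG_groupoid G f \<and>
     (\<forall>a\<in>G. \<forall>b\<in>G. \<forall>c\<in>G. f a b = f a c \<longrightarrow> f b a = f c a)"

definition Tr3_AG_groupoid :: "'a set \<Rightarrow> ('a \<Rightarrow> 'a \<Rightarrow> 'a) \<Rightarrow> bool" where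
  "Tr3_AG_groupoid G f \<longleftrightarrow> AG_groupoid G f \<and>
     (\<forall>a\<in>G. \<forall>b\<in>G. \<forall>c\<in>G. f b a = f c a \<longrightarrow> f a b = f a c)"

definition T3_AG_groupoid :: "'a set \<Rightarrow> ('a \<Rightarrow> 'a \<Rightarrow> 'a) \<Rightarrow> bool" where
  "T3_AG_groupoid G f \<longleftrightarrow> Tl3_AG_groupoid G f \<and> Tr3_AG_groupoid G f"

text \<open>m x k matrices over Z_p: entries in {0..<p} at positions i<m, j<k, and 0 elsewhere
  (canonical representatives, so equality of functions = equality of matrices).\<close>
definition zp_matrices :: "int \<Rightarrow> nat \<Rightarrow> nat \<Rightarrow> (nat \<Rightarrow> nat \<Rightarrow> int) set" where
  "zp_matrices p m k = {A. (\<forall>i j. (i < m \<and> j < k) \<longrightarrow> 0 \<le> A i j \<and> A i j < p) \<and>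
                           (\<forall>i j. \<not>(i < m \<and> j < k) \<longrightarrow> A i j = 0)}"

definition zp_op :: "int \<Rightarrow> nat \<Rightarrow> nat \<Rightarrow> int \<Rightarrow> int \<Rightarrow>
    (nat \<Rightarrow> nat \<Rightarrow> int) \<Rightarrow> (nat \<Rightarrow> nat \<Rightarrow> int) \<Rightarrow> (nat \<Rightarrow> nat \<Rightarrow> int)" where
  "zp_op p m k t u A B = (\<lambda>i j. if i < m \<and> j < k then (t * A i j + u * B i j) mod p else 0)"

end

theory Submission
  imports Defs "HOL-Number_Theory.Cong"
begin

text \<open>Expanding both sides of (a*b)*c = (c*b)*a gives t^2 a + t u b + u c and t^2 c + t u b + u a,
  which agree once t^2 is replaced by u.  Since p is prime and u, hence also t, is a unit
  mod p, both translations x \<mapsto> a*x and x \<mapsto> x*a are injective, and a cancellative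
  AG-groupoid is trivially a T^3-AG-groupoid.\<close>

definition left_cancellative :: "'a set \<Rightarrow> ('a \<Rightarrow> 'a \<Rightarrow> 'a) \<Rightarrow> bool" where
  "left_cancellative G f \<longleftrightarrow> (\<forall>a\<in>G. \<forall>b\<in>G. \<forall>c\<in>G. f a b = f a c \<longrightarrow> b = c)"

definition right_cancellative :: "'a set \<Rightarrow> ('a \<Rightarrow> 'a \<Rightarrow> 'a) \<Rightarrow> bool" where
  "right_cancellative G f \<longleftrightarrow> (\<forall>a\<in>G. \<forall>b\<in>G. \<forall>c\<in>G. f b a = f c a \<longrightarrow> b = c)"

lemma cancellative_AG_groupoid_imp_T3:
  assumes "AG_groupoid G f" "left_cancellative G f" "right_cancellative G f"
  shows "T3_AG_groupoid G f"
  using assms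
  unfolding T3_AG_groupoid_def Tl3_AG_groupoid_def Tr3_AG_groupoid_def
    left_cancellative_def right_cancellative_def
  by metis

lemma affine_square_cong:
  fixes p t u x y z :: int
  assumes "t^2 mod p = u mod p"
  shows "[t * ((t * x + u * y) mod p) + u * z = u * x + t * u * y + u * z] (mod p)"
proof -
  have "[(t * x + u * y) mod p = t * x + u * y] (mod p)"
    by (simp add: cong_def)
  then have "[t * ((t * x + u * y) mod p) + u * z = t * (t * x + u * y) + u * z] (mod p)"
    by (intro cong_add cong_mult cong_refl)
  also have "t * (t * x + u * y) + u * z = t^2 * x + t * u * y + u * z"
    by (simp add: algebra_simps power2_eq_square)
  also have "[t^2 * x + t * u * y + u * z = u * x + t * u * y + u * z] (mod p)"
    using assms by (intro cong_add cong_mult cong_refl) (simp add: cong_def)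
  finally show ?thesis .
qed

lemma affine_AG_law_mod:
  fixes p t u a b c :: int
  assumes "t^2 mod p = u mod p"
  shows "(t * ((t * a + u * b) mod p) + u * c) mod p = (t * ((t * c + u * b) mod p) + u * a) mod p"
proof -
  have "[t * ((t * a + u * b) mod p) + u * c = u * c + t * u * b + u * a] (mod p)"
    using affine_square_cong[OF assms, of a b c] by (simp add: algebra_simps)
  also have "[u * c + t * u * b + u * a = t * ((t * c + u * b) mod p) + u * a] (mod p)"
    using affine_square_cong[OF assms, of c b a] by (rule cong_sym)
  finally show ?thesis
    by (simp add: cong_def)
qed

lemma residue_mod_prime_affine_cancel:
  fixes p c d x y :: int
  assumes "prime p" "\<not> p dvd c"
    and "0 \<le> x" "x < p" "0 \<le> y" "y < p"
    and "(d + c * x) mod p = (d + c * y) mod p"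
  shows "x = y"
proof -
  have "coprime c p"
    using assms(1,2) prime_imp_coprime coprime_commute by blast
  moreover have "[c * x = c * y] (mod p)"
    using assms(7) cong_add_lcancel unfolding cong_def by blast
  ultimately have "[x = y] (mod p)"
    using cong_mult_lcancel by blast
  then show ?thesis
    using assms(3-6) cong_less_imp_eq_int by blast
qed

lemma not_dvd_square_root_mod:
  fixes p t u :: int
  assumes "t^2 mod p = u mod p" "\<not> p dvd u"
  shows "\<not> p dvd t"
proof
  assume "p dvd t"
  then have "p dvd t^2"
    unfolding power2_eq_square by (rule dvd_mult2)
  then have "u mod p = 0"
    using assms(1) by simp
  then show False
    using assms(2) by (simp add: dvd_eq_mod_eq_0)
qed

lemma zp_matrices_eqI:
  assumes "A \<in> zp_matrices p m k" "B \<in> zp_matrices p m k"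
    and "\<And>i j. i < m \<Longrightarrow> j < k \<Longrightarrow> A i j = B i j"
  shows "A = B"
proof (intro ext)
  fix i j
  show "A i j = B i j"
    using assms by (cases "i < m \<and> j < k") (auto simp: zp_matrices_def)
qed

lemma zp_op_entry:
  "i < m \<Longrightarrow> j < k \<Longrightarrow> zp_op p m k t u A B i j = (t * A i j + u * B i j) mod p"
  by (simp add: zp_op_def)

lemma zp_op_closed:
  assumes "p > 0"
  shows "zp_op p m k t u A B \<in> zp_matrices p m k"
  using assms by (simp add: zp_matrices_def zp_op_def)

lemma zp_op_AG_groupoid:
  assumes "p > 0" "t^2 mod p = u mod p"
  shows "AG_groupoid (zp_matrices p m k) (zp_op p m k t u)"
proof -
  have "zp_op p m k t u (zp_op p m k t u a b) c = zp_op p m k t u (zp_op p m k t u c b) a"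
    for a b c
    by (intro ext) (simp add: zp_op_def affine_AG_law_mod[OF assms(2)])
  then show ?thesis
    using zp_op_closed[OF assms(1)] by (simp add: AG_groupoid_def)
qed

lemma zp_op_left_cancellative:
  assumes "prime p" "\<not> p dvd u"
  shows "left_cancellative (zp_matrices p m k) (zp_op p m k t u)"
  unfolding left_cancellative_def
proof (intro ballI impI)
  fix a b c
  assume b: "b \<in> zp_matrices p m k" and c: "c \<in> zp_matrices p m k"
    and eq: "zp_op p m k t u a b = zp_op p m k t u a c"
  show "b = c"
  proof (rule zp_matrices_eqI[OF b c])
    fix i j
    assume ij: "i < m" "j < k"
    then have "(t * a i j + u * b i j) mod p = (t * a i j + u * c i j) mod p"
      using eq by (metis zp_op_entry)
    then show "b i j = c i j"
      using residue_mod_prime_affine_cancel[OF assms] b c ij by (simp add: zp_matrices_def)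
  qed
qed

lemma zp_op_right_cancellative:
  assumes "prime p" "\<not> p dvd t"
  shows "right_cancellative (zp_matrices p m k) (zp_op p m k t u)"
  unfolding right_cancellative_def
proof (intro ballI impI)
  fix a b c
  assume b: "b \<in> zp_matrices p m k" and c: "c \<in> zp_matrices p m k"
    and eq: "zp_op p m k t u b a = zp_op p m k t u c a"
  show "b = c"
  proof (rule zp_matrices_eqI[OF b c])
    fix i j
    assume ij: "i < m" "j < k"
    then have "(u * a i j + t * b i j) mod p = (u * a i j + t * c i j) mod p"
      using eq by (metis zp_op_entry add.commute)
    then show "b i j = c i j"
      using residue_mod_prime_affine_cancel[OF assms] b c ij by (simp add: zp_matrices_def)
  qed
qed

theorem mainTheorem5:
  fixes p t u :: int and m k :: nat
  assumes "prime p" and "p \<ge> 3" and "m \<ge> 1" and "k \<ge> 1"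
    and "0 \<le> t" and "t < p" and "0 \<le> u" and "u < p"
    and "u \<noteq> 0" and "t^2 mod p = u mod p"
  shows "T3_AG_groupoid (zp_matrices p m k) (zp_op p m k t u)"
proof -
  have u_unit: "\<not> p dvd u"
    using assms(7-9) zdvd_not_zless by fastforce
  have t_unit: "\<not> p dvd t"
    using not_dvd_square_root_mod[OF assms(10) u_unit] .
  have "p > 0"
    using assms(2) by simp
  show ?thesis
    using zp_op_AG_groupoid[OF \<open>p > 0\<close> assms(10)]
      zp_op_left_cancellative[OF assms(1) u_unit]
      zp_op_right_cancellative[OF assms(1) t_unit]
    by (rule cancellative_AG_groupoid_imp_T3)
qed

end
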